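(* Let $0<V\le1$ and let $$P^{col}_{BB84}(ab|xy)=\frac{1+(-1)^{a\oplus b\oplus x\cdot y}\big[\delta_{x,y}V+\tfrac{1-V}{2}\big]+(-1)^{a\oplus b\oplus x\oplus y}\tfrac{1-V}{2}}{4},\qquad a,b,x,y\in\{0,1\}.$$ In the steering scenario described in the context, the steering cost of $P^{col}_{BB84}$ is $C_{steer}(P^{col}_{BB84})=V$.
   Context: Steering scenario: Alice performs two black-box dichotomic measurements $x\in\{0,1\}$ (outcomes $a\in\{0,1\}$) on her part of an unknown $d\times2$ quantum state $\rho_{AB}$; Bob performs projective qubit measurements in two mutually unbiased bases $\{|f_1\rangle,|f_2\rangle\}$, $\{|g_1\rangle,|g_2\rangle\}$ of $\mathbb{C}^2$ ($|\langle f_i|g_j\rangle|^2=1/2$), with $\Pi_{b|0}=|f_{b+1}\rangle\langle f_{b+1}|$, $\Pi_{b|1}=|g_{b+1}\rangle\langle g_{b+1}|$. Let $\mathcal{N}$ be the set of boxes $p(ab|xy)=\operatorname{Tr}[\Pi_{b|y}\sigma_{a|x}]$ with $\sigma_{a|x}=\operatorname{Tr}_A[(M_{a|x}\otimes\mathbb{1})\rho_{AB}]$ for some such state and POVMs $\{M_{a|x}\}$. A box is unsteerable if $p(ab|xy)=\sum_\lambda p(\lambda)p(a|x,\lambda)\operatorname{Tr}(\Pi_{b|y}\rho_\lambda)$ for some probability distribution $p(\lambda)$, conditional distributions $p(a|x,\lambda)$ and qubit density operators $\rho_\lambda$; otherwise steerable. The steering cost $C_{steer}(P)$ of $P\in\mathcal{N}$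 is the minimum of $p_S\in[0,1]$ over all decompositions $P=p_SP_S+(1-p_S)P_{US}$ with $P_S\in\mathcal{N}$ steerable and $P_{US}$ unsteerable. $\oplus$ is addition modulo 2. *)

theory Defs
  imports Complex_Main
begin

text \<open>Alice's space is C^d (indices 0..<d), Bob's space is C^2 (indices 0,1);
  the joint space C^d (x) C^2 is indexed by pairs (i,k), i < d, k < 2.
  Boxes p(ab|xy) are functions a b x y with a,b,x,y in {0,1}.\<close>

type_synonym box = "nat \<Rightarrow> nat \<Rightarrow> nat \<Rightarrow> nat \<Rightarrow> real"

definition bits :: "nat set" where "bits = {0,1}"

definition psd_on :: "'i set \<Rightarrow> ('i \<Rightarrow> 'i \<Rightarrow> complex) \<Rightarrow> bool" where
  "psd_on I A \<longleftrightarrow> (\<forall>v::'i \<Rightarrow> complex.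
     let q = (\<Sum>r\<in>I. \<Sum>s\<in>I. cnj (v r) * A r s * v s) in Im q = 0 \<and> Re q \<ge> 0)"

definition mtrace :: "'i set \<Rightarrow> ('i \<Rightarrow> 'i \<Rightarrow> complex) \<Rightarrow> complex" where
  "mtrace I A = (\<Sum>r\<in>I. A r r)"

definition mmult :: "'i set \<Rightarrow> ('i \<Rightarrow> 'i \<Rightarrow> complex) \<Rightarrow> ('i \<Rightarrow> 'i \<Rightarrow> complex) \<Rightarrow> ('i \<Rightarrow> 'i \<Rightarrow> complex)" where
  "mmult I A B = (\<lambda>r s. \<Sum>t\<in>I. A r t * B t s)"

definition density_on :: "'i set \<Rightarrow> ('i \<Rightarrow> 'i \<Rightarrow> complex) \<Rightarrow> bool" where
  "density_on I \<rho> \<longleftrightarrow> psd_on I \<rho> \<and> mtrace I \<rho> = 1"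

definition joint_idx :: "nat \<Rightarrow> (nat \<times> nat) set" where
  "joint_idx d = {..<d} \<times> {..<2}"

definition povm2 :: "nat \<Rightarrow> (nat \<Rightarrow> nat \<Rightarrow> nat \<Rightarrow> complex) \<Rightarrow> bool" where
  "povm2 d M \<longleftrightarrow> (\<forall>a\<in>bits. psd_on {..<d} (M a)) \<and>
     (\<forall>i<d. \<forall>j<d. M 0 i j + M 1 i j = (if i = j then 1 else 0))"

text \<open>Partial trace over A of (M (x) 1) rho: a 2x2 operator on Bob's qubit.\<close>
definition ptraceA :: "nat \<Rightarrow> (nat \<Rightarrow> nat \<Rightarrow> complex) \<Rightarrow> (nat \<times> nat \<Rightarrow> nat \<times> nat \<Rightarrow> complex)
     \<Rightarrow> (nat \<Rightarrow> nat \<Rightarrow> complex)" where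
  "ptraceA d M \<rho> = (\<lambda>k l. \<Sum>i<d. \<Sum>j<d. M i j * \<rho> (j, k) (i, l))"

definition proj :: "(nat \<Rightarrow> complex) \<Rightarrow> (nat \<Rightarrow> nat \<Rightarrow> complex)" where
  "proj v = (\<lambda>k l. v k * cnj (v l))"

definition inner2 :: "(nat \<Rightarrow> complex) \<Rightarrow> (nat \<Rightarrow> complex) \<Rightarrow> complex" where
  "inner2 u v = (\<Sum>k<2. cnj (u k) * v k)"

text \<open>Bob's measurements: basis e y b (vector of outcome b for setting y), y,b in {0,1}:
  e 0 = (f_1,f_2), e 1 = (g_1,g_2), two mutually unbiased orthonormal bases of C^2.\<close>
definition MUB_pair :: "(nat \<Rightarrow> nat \<Rightarrow> nat \<Rightarrow> complex) \<Rightarrow> bool" where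
  "MUB_pair e \<longleftrightarrow>
     (\<forall>y\<in>bits. \<forall>b\<in>bits. \<forall>b'\<in>bits. inner2 (e y b) (e y b') = (if b = b' then 1 else 0)) \<and>
     (\<forall>i\<in>bits. \<forall>j\<in>bits. (cmod (inner2 (e 0 i) (e 1 j)))\<^sup>2 = 1/2)"

definition quantum_box :: "(nat \<Rightarrow> nat \<Rightarrow> nat \<Rightarrow> complex) \<Rightarrow> box \<Rightarrow> bool" where
  "quantum_box e P \<longleftrightarrow> (\<exists>d>0. \<exists>\<rho> M.
     density_on (joint_idx d) \<rho> \<and> (\<forall>x\<in>bits. povm2 d (M x)) \<and>
     (\<forall>a\<in>bits. \<forall>b\<in>bits. \<forall>x\<in>bits. \<forall>y\<in>bits.
        P a b x y = Re (mtrace {..<2} (mmult {..<2} (proj (e y b)) (ptraceA d (M x a) \<rho>)))))"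

text \<open>Unsteerable (LHS) boxes, with a finite hidden variable lambda < n.\<close>
definition unsteerable :: "(nat \<Rightarrow> nat \<Rightarrow> nat \<Rightarrow> complex) \<Rightarrow> box \<Rightarrow> bool" where
  "unsteerable e P \<longleftrightarrow> (\<exists>n::nat. \<exists>pl::nat \<Rightarrow> real. \<exists>pa::nat \<Rightarrow> nat \<Rightarrow> nat \<Rightarrow> real.
     \<exists>rl::nat \<Rightarrow> nat \<Rightarrow> nat \<Rightarrow> complex.
     (\<forall>l<n. pl l \<ge> 0) \<and> (\<Sum>l<n. pl l) = 1 \<and>
     (\<forall>l<n. \<forall>x\<in>bits. (\<forall>a\<in>bits. pa l x a \<ge> 0) \<and> pa l x 0 + pa l x 1 = 1) \<and>
     (\<forall>l<n. density_on {..<2} (rl l)) \<and>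
     (\<forall>a\<in>bits. \<forall>b\<in>bits. \<forall>x\<in>bits. \<forall>y\<in>bits.
        P a b x y = (\<Sum>l<n. pl l * pa l x a *
                       Re (mtrace {..<2} (mmult {..<2} (proj (e y b)) (rl l))))))"

definition steerable :: "(nat \<Rightarrow> nat \<Rightarrow> nat \<Rightarrow> complex) \<Rightarrow> box \<Rightarrow> bool" where
  "steerable e P \<longleftrightarrow> \<not> unsteerable e P"

definition steer_weights :: "(nat \<Rightarrow> nat \<Rightarrow> nat \<Rightarrow> complex) \<Rightarrow> box \<Rightarrow> real set" where
  "steer_weights e P = {pS. 0 \<le> pS \<and> pS \<le> 1 \<and> (\<exists>PS PUS.
     quantum_box e PS \<and> steerable e PS \<and> unsteerable e PUS \<and>
     (\<forall>a\<in>bits. \<forall>b\<in>bits. \<forall>x\<in>bits. \<forall>y\<in>bits.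
        P a b x y = pS * PS a b x y + (1 - pS) * PUS a b x y))}"

definition is_steering_cost :: "(nat \<Rightarrow> nat \<Rightarrow> nat \<Rightarrow> complex) \<Rightarrow> box \<Rightarrow> real \<Rightarrow> bool" where
  "is_steering_cost e P c \<longleftrightarrow> c \<in> steer_weights e P \<and> (\<forall>p\<in>steer_weights e P. c \<le> p)"

definition P_col_BB84 :: "real \<Rightarrow> box" where
  "P_col_BB84 V = (\<lambda>a b x y.
     (1 + (-1) ^ (a + b + x * y) * ((if x = y then 1 else 0) * V + (1 - V) / 2)
        + (-1) ^ (a + b + x + y) * ((1 - V) / 2)) / 4)"

end

theory Submission
  imports Defs
begin

text \<open>The box is the mixture \<open>V \<cdot> P\<^sub>S + (1 - V) \<cdot> P\<^sub>U\<^sub>S\<close>, where \<open>P\<^sub>S\<close> comes from measuring the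
  maximally entangled state in the two bases (perfectly correlated in the first basis,
  anticorrelated in the second) and \<open>P\<^sub>U\<^sub>S\<close> from a classically correlated state that admits a
  local hidden state model. This gives quantum realizability and \<open>C\<^sub>s\<^sub>t\<^sub>e\<^sub>e\<^sub>r \<le> V\<close>.
  Conversely, in any decomposition with steerable weight \<open>p < 1\<close> the unsteerable part inherits
  the perfect correlations in the first basis, so each of its hidden states is a vector of that
  basis and gives unbiased outcomes in the mutually unbiased second basis; hence its correlator
  in the second basis vanishes. Comparing correlators there gives \<open>-V = p \<cdot> E(P\<^sub>S) \<ge> -p\<close>.\<close>

section \<open>Positive semidefinite matrices\<close>

definition qform :: "'i set \<Rightarrow> ('i \<Rightarrow> 'i \<Rightarrow> complex) \<Rightarrow> ('i \<Rightarrow> complex) \<Rightarrow> complex" where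
  "qform I A v = (\<Sum>r\<in>I. \<Sum>s\<in>I. cnj (v r) * A r s * v s)"

lemma psd_on_iff_qform: "psd_on I A \<longleftrightarrow> (\<forall>v. Im (qform I A v) = 0 \<and> Re (qform I A v) \<ge> 0)"
  by (simp add: psd_on_def qform_def Let_def)

lemma qform_restrict:
  assumes "finite I" "S \<subseteq> I" "\<forall>x\<in>I - S. v x = 0"
  shows "qform I A v = qform S A v"
proof -
  have "qform I A v = (\<Sum>r\<in>I. \<Sum>s\<in>S. cnj (v r) * A r s * v s)"
    unfolding qform_def
    by (rule sum.cong[OF refl], rule sum.mono_neutral_right) (use assms in auto)
  also have "\<dots> = qform S A v" unfolding qform_def
    by (rule sum.mono_neutral_right) (use assms in \<open>auto intro!: sum.neutral\<close>)
  finally show ?thesis .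
qed

lemma qform_singleton: "qform {r} A v = cnj (v r) * A r r * v r"
  by (simp add: qform_def)

lemma qform_doubleton:
  "r \<noteq> s \<Longrightarrow> qform {r,s} A v = cnj (v r) * A r r * v r + cnj (v r) * A r s * v s
     + cnj (v s) * A s r * v r + cnj (v s) * A s s * v s"
  by (simp add: qform_def)

lemma qform_insert:
  assumes "finite I" "p \<notin> I"
  shows "qform (insert p I) A v = cnj (v p) * A p p * v p + cnj (v p) * (\<Sum>s\<in>I. A p s * v s)
     + (\<Sum>r\<in>I. cnj (v r) * A r p) * v p + qform I A v"
  using assms
  by (simp add: qform_def sum.distrib sum_distrib_left sum_distrib_right algebra_simps)

lemma psd_on_subset:
  assumes "psd_on J A" "I \<subseteq> J" "finite J"
  shows "psd_on I A"
  unfolding psd_on_iff_qform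
proof
  fix v
  let ?v = "\<lambda>x. if x \<in> I then v x else (0::complex)"
  have "qform J A ?v = qform I A ?v" by (rule qform_restrict) (use assms in auto)
  also have "\<dots> = qform I A v" unfolding qform_def by (intro sum.cong) auto
  finally show "Im (qform I A v) = 0 \<and> 0 \<le> Re (qform I A v)"
    using assms(1) unfolding psd_on_iff_qform by metis
qed

lemma psd_on_diag:
  assumes "psd_on I A" "finite I" "r \<in> I"
  shows "Im (A r r) = 0" "Re (A r r) \<ge> 0"
proof -
  let ?v = "\<lambda>x. if x = r then 1 else (0::complex)"
  have "qform I A ?v = qform {r} A ?v" by (rule qform_restrict) (use assms in auto)
  then have "qform I A ?v = A r r" by (simp add: qform_singleton)
  with assms(1) show "Im (A r r) = 0" "Re (A r r) \<ge> 0" unfolding psd_on_iff_qform by metis+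
qed

lemma psd_on_hermitian:
  assumes "psd_on I A" "finite I" "r \<in> I" "s \<in> I"
  shows "A s r = cnj (A r s)"
proof (cases "r = s")
  case True
  then show ?thesis using psd_on_diag[OF assms(1-3)] by (simp add: complex_eq_iff)
next
  case False
  let ?v1 = "\<lambda>x. if x = r then 1 else if x = s then 1 else (0::complex)"
  let ?v2 = "\<lambda>x. if x = r then 1 else if x = s then \<i> else (0::complex)"
  have "qform I A ?v1 = qform {r,s} A ?v1" by (rule qform_restrict) (use assms in auto)
  also have "\<dots> = A r r + A r s + A s r + A s s" using False by (simp add: qform_doubleton)
  finally have 1: "Im (A r r + A r s + A s r + A s s) = 0"
    using assms(1) unfolding psd_on_iff_qform by metis
  have "qform I A ?v2 = qform {r,s} A ?v2" by (rule qform_restrict) (use assms in auto)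
  also have "\<dots> = A r r + \<i> * A r s - \<i> * A s r + A s s"
    using False by (simp add: qform_doubleton algebra_simps)
  finally have 2: "Im (A r r + \<i> * A r s - \<i> * A s r + A s s) = 0"
    using assms(1) unfolding psd_on_iff_qform by metis
  have "Im (A r r) = 0" "Im (A s s) = 0" using psd_on_diag[OF assms(1,2)] assms by auto
  with 1 2 show ?thesis by (simp add: complex_eq_iff)
qed

lemma psd_on_zero_diag_imp_zero_column:
  assumes "psd_on I A" "finite I" "p \<in> I" "A p p = 0" "r \<in> I"
  shows "A r p = 0"
proof (rule ccontr)
  assume ne: "A r p \<noteq> 0"
  then have rp: "r \<noteq> p" using assms by auto
  define c where "c = Re (A r r) + 1"
  define t where "t = - of_real c / A r p"
  let ?v = "\<lambda>x. if x = r then 1 else if x = p then t else (0::complex)"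
  have rt: "A r p * t = - of_real c" using ne by (simp add: t_def)
  have "cnj t * A p r = cnj (A r p * t)"
    using psd_on_hermitian[OF assms(1,2,5,3)] by (simp add: mult.commute)
  with rt have tr: "cnj t * A p r = - of_real c" by simp
  have "qform I A ?v = qform {r,p} A ?v" by (rule qform_restrict) (use assms in auto)
  also have "\<dots> = A r r - 2 * of_real c" using rp assms(4) rt tr by (simp add: qform_doubleton)
  finally have "Re (qform I A ?v) < 0"
    using psd_on_diag[OF assms(1,2,5)] by (simp add: c_def)
  then show False using assms(1) unfolding psd_on_iff_qform by (metis not_le)
qed

lemma psd_on_zero_diag_imp_zero_row:
  assumes "psd_on I A" "finite I" "p \<in> I" "A p p = 0" "r \<in> I"
  shows "A p r = 0"
  using psd_on_zero_diag_imp_zero_column[OF assms] psd_on_hermitian[OF assms(1,2,5,3)] by simp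

text \<open>With the junk value \<open>x / 0 = 0\<close>, for \<open>A p p = 0\<close> this is \<open>A\<close> itself.\<close>
definition schur_complement :: "('i \<Rightarrow> 'i \<Rightarrow> complex) \<Rightarrow> 'i \<Rightarrow> 'i \<Rightarrow> 'i \<Rightarrow> complex" where
  "schur_complement A p r s = A r s - A r p * cnj (A s p) / A p p"

lemma qform_schur_complement:
  "qform I (schur_complement A p) v
     = qform I A v - (\<Sum>r\<in>I. cnj (v r) * A r p) * (\<Sum>s\<in>I. cnj (A s p) * v s) / A p p"
proof -
  have "(\<Sum>r\<in>I. \<Sum>s\<in>I. cnj (v r) * (A r p * cnj (A s p) / A p p) * v s)
      = (\<Sum>r\<in>I. cnj (v r) * A r p) * (\<Sum>s\<in>I. cnj (A s p) * v s) / A p p"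
    unfolding sum_product sum_divide_distrib by (intro sum.cong refl) (simp add: algebra_simps)
  then show ?thesis
    unfolding qform_def schur_complement_def by (simp add: sum_subtractf algebra_simps)
qed

lemma psd_on_schur_complement:
  assumes psd: "psd_on (insert p I) A" and fin: "finite I" and p: "p \<notin> I"
  shows "psd_on I (schur_complement A p)"
proof (cases "A p p = 0")
  case True
  then have "schur_complement A p = A" by (simp add: schur_complement_def fun_eq_iff)
  then show ?thesis using psd_on_subset[OF psd] fin by auto
next
  case False
  have herm: "\<And>r s. r \<in> insert p I \<Longrightarrow> s \<in> insert p I \<Longrightarrow> A s r = cnj (A r s)"
    using psd_on_hermitian[OF psd] fin by blast
  show ?thesis unfolding psd_on_iff_qform
  proof
    fix v
    define X where "X = (\<Sum>s\<in>I. cnj (A s p) * v s)"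
    define t where "t = - X / A p p"
    let ?w = "v(p := t)"
    have "A p s = cnj (A s p)" if "s \<in> I" for s using herm[of s p] that by simp
    then have "(\<Sum>s\<in>I. A p s * ?w s) = X"
      using p by (auto simp: X_def intro!: sum.cong)
    moreover have "(\<Sum>r\<in>I. cnj (?w r) * A r p) = cnj X"
      using p by (auto simp: X_def mult.commute intro!: sum.cong)
    moreover have "qform I A ?w = qform I A v"
      using p unfolding qform_def by (auto intro!: sum.cong)
    moreover have "cnj (A p p) = A p p" using herm[of p p] by simp
    ultimately have "qform (insert p I) A ?w
        = cnj t * A p p * t + cnj t * X + cnj X * t + qform I A v"
      by (simp add: qform_insert[OF fin p])
    also have "cnj t * A p p * t + cnj t * X + cnj X * t = - (cnj X * X / A p p)"
      using False \<open>cnj (A p p) = A p p\<close> by (simp add: t_def field_simps)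
    finally have "qform (insert p I) A ?w = qform I A v - cnj X * X / A p p"
      by (simp only: diff_conv_add_uminus add.commute)
    also have "\<dots> = qform I (schur_complement A p) v"
      by (simp add: qform_schur_complement X_def mult.commute)
    finally show "Im (qform I (schur_complement A p) v) = 0 \<and> 0 \<le> Re (qform I (schur_complement A p) v)"
      using psd unfolding psd_on_iff_qform by metis
  qed
qed

lemma schur_complement_vanishes:
  assumes psd: "psd_on (insert p I) A" and fin: "finite I" and r: "r \<in> insert p I"
  shows "schur_complement A p r p = 0" "schur_complement A p p r = 0"
proof -
  have fin': "finite (insert p I)" using fin by simp
  have herm: "A p r = cnj (A r p)" "cnj (A p p) = A p p"
    using psd_on_hermitian[OF psd fin' r insertI1] psd_on_hermitian[OF psd fin' insertI1 insertI1]
    by simp_all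
  have "A r p = 0" "A p r = 0" if "A p p = 0"
    using psd_on_zero_diag_imp_zero_column[OF psd fin' insertI1 that r]
      psd_on_zero_diag_imp_zero_row[OF psd fin' insertI1 that r] by simp_all
  with herm show "schur_complement A p r p = 0" "schur_complement A p p r = 0"
    by (cases "A p p = 0"; simp add: schur_complement_def)+
qed

lemma schur_complement_split:
  fixes A :: "'i \<Rightarrow> 'i \<Rightarrow> complex"
  assumes "A p p = of_real c" "c \<ge> 0"
  shows "A r s = A r p / sqrt c * cnj (A s p / sqrt c) + schur_complement A p r s"
  using assms by (simp add: schur_complement_def flip: of_real_mult)

lemma psd_on_gram_list:
  "finite I \<Longrightarrow> psd_on I A \<Longrightarrow> \<exists>ws. \<forall>r\<in>I. \<forall>s\<in>I. A r s = (\<Sum>w\<leftarrow>ws. w r * cnj (w s))"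
proof (induction I arbitrary: A rule: finite_induct)
  case empty
  then show ?case by auto
next
  case (insert p I A)
  obtain ws where ws: "\<forall>r\<in>I. \<forall>s\<in>I. schur_complement A p r s = (\<Sum>w\<leftarrow>ws. w r * cnj (w s))"
    using insert.IH psd_on_schur_complement[OF insert.prems insert.hyps(1,2)] by blast
  let ?ws = "map (\<lambda>w. w(p := 0)) ws"
  have ws': "schur_complement A p r s = (\<Sum>w\<leftarrow>?ws. w r * cnj (w s))"
    if "r \<in> insert p I" "s \<in> insert p I" for r s
  proof (cases "r = p \<or> s = p")
    case True
    then show ?thesis using schur_complement_vanishes[OF insert.prems insert.hyps(1)] that
      by (auto simp: o_def)
  next
    case False
    then show ?thesis using ws that by (simp add: o_def)
  qed
  define c where "c = Re (A p p)"
  have "A p p = of_real c" "c \<ge> 0"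
    using psd_on_diag[OF insert.prems] insert.hyps(1) by (auto simp: c_def complex_eq_iff)
  then have "A r s = (\<Sum>w\<leftarrow>(\<lambda>x. A x p / sqrt c) # ?ws. w r * cnj (w s))"
    if "r \<in> insert p I" "s \<in> insert p I" for r s
    unfolding list.map sum_list.Cons ws'[OF that, symmetric] by (rule schur_complement_split)
  then show ?case by blast
qed

lemma psd_on_gram:
  assumes "finite I" "psd_on I A"
  obtains n :: nat and W where "\<forall>r\<in>I. \<forall>s\<in>I. A r s = (\<Sum>m<n. W m r * cnj (W m s))"
proof -
  obtain ws where ws: "\<forall>r\<in>I. \<forall>s\<in>I. A r s = (\<Sum>w\<leftarrow>ws. w r * cnj (w s))"
    using psd_on_gram_list[OF assms] by blast
  have "(\<Sum>w\<leftarrow>ws. w r * cnj (w s)) = (\<Sum>m<length ws. (ws ! m) r * cnj ((ws ! m) s))" for r s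
    by (simp add: sum_list_sum_nth atLeast0LessThan)
  with ws show thesis by (intro that[where n = "length ws" and W = "(!) ws"]) simp
qed

lemma qform_gram:
  fixes n :: nat
  assumes "\<forall>r\<in>I. \<forall>s\<in>I. A r s = (\<Sum>m<n. W m r * cnj (W m s))"
  shows "qform I A v = (\<Sum>m<n. of_real ((cmod (\<Sum>r\<in>I. cnj (v r) * W m r))\<^sup>2))"
proof -
  have "qform I A v = (\<Sum>r\<in>I. \<Sum>s\<in>I. \<Sum>m<n. (cnj (v r) * W m r) * (v s * cnj (W m s)))"
    unfolding qform_def
    using assms by (intro sum.cong refl) (simp add: sum_distrib_left sum_distrib_right algebra_simps)
  also have "\<dots> = (\<Sum>m<n. (\<Sum>r\<in>I. cnj (v r) * W m r) * (\<Sum>s\<in>I. v s * cnj (W m s)))"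
    by (subst sum.swap, subst (2) sum.swap) (simp add: sum_product)
  also have "\<dots> = (\<Sum>m<n. of_real ((cmod (\<Sum>r\<in>I. cnj (v r) * W m r))\<^sup>2))"
  proof (intro sum.cong refl)
    fix m
    have "(\<Sum>s\<in>I. v s * cnj (W m s)) = cnj (\<Sum>r\<in>I. cnj (v r) * W m r)"
      by (simp add: mult.commute)
    then show "(\<Sum>r\<in>I. cnj (v r) * W m r) * (\<Sum>s\<in>I. v s * cnj (W m s))
        = of_real ((cmod (\<Sum>r\<in>I. cnj (v r) * W m r))\<^sup>2)"
      by (simp only: complex_norm_square)
  qed
  finally show ?thesis .
qed

lemma trace_mult_psd_nonneg:
  assumes "finite I" "psd_on I A" "psd_on I B"
  shows "Re (mtrace I (mmult I A B)) \<ge> 0"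
proof -
  obtain n :: nat and W where W: "\<forall>r\<in>I. \<forall>s\<in>I. A r s = (\<Sum>m<n. W m r * cnj (W m s))"
    using psd_on_gram[OF assms(1,2)] .
  have "mtrace I (mmult I A B) = (\<Sum>r\<in>I. \<Sum>s\<in>I. \<Sum>m<n. cnj (W m s) * B s r * W m r)"
    unfolding mtrace_def mmult_def
    using W by (intro sum.cong refl) (simp add: sum_distrib_left sum_distrib_right algebra_simps)
  also have "\<dots> = (\<Sum>r\<in>I. \<Sum>m<n. \<Sum>s\<in>I. cnj (W m s) * B s r * W m r)"
    by (rule sum.cong[OF refl], rule sum.swap)
  also have "\<dots> = (\<Sum>m<n. \<Sum>r\<in>I. \<Sum>s\<in>I. cnj (W m s) * B s r * W m r)"
    by (rule sum.swap)
  also have "\<dots> = (\<Sum>m<n. qform I B (W m))"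
    unfolding qform_def by (rule sum.cong[OF refl], rule sum.swap)
  finally show ?thesis
    using assms(3) unfolding psd_on_iff_qform by (simp add: Re_sum sum_nonneg)
qed

lemma qform_rank1:
  assumes "finite I"
  shows "qform I (\<lambda>r s. z r * cnj (z s)) v = of_real ((cmod (\<Sum>r\<in>I. cnj (v r) * z r))\<^sup>2)"
proof -
  have "qform I (\<lambda>r s. z r * cnj (z s)) v = (\<Sum>r\<in>I. cnj (v r) * z r) * (\<Sum>s\<in>I. cnj (z s) * v s)"
    unfolding qform_def sum_product by (intro sum.cong refl) (simp add: algebra_simps)
  also have "(\<Sum>s\<in>I. cnj (z s) * v s) = cnj (\<Sum>r\<in>I. cnj (v r) * z r)"
    by (simp add: mult.commute)
  finally show ?thesis by (simp only: complex_norm_square)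
qed

lemma psd_on_rank1: "finite I \<Longrightarrow> psd_on I (\<lambda>r s. z r * cnj (z s))"
  unfolding psd_on_iff_qform qform_rank1 by simp

lemma qform_combination:
  "qform I (\<lambda>r s. a * A r s + b * B r s) v = a * qform I A v + b * qform I B v"
  unfolding qform_def by (simp add: sum.distrib sum_distrib_left algebra_simps)

lemma psd_on_combination:
  assumes "psd_on I A" "psd_on I B" "a \<ge> 0" "b \<ge> 0"
  shows "psd_on I (\<lambda>r s. of_real a * A r s + of_real b * B r s)"
  using assms unfolding psd_on_iff_qform qform_combination by simp

lemma mtrace_combination:
  "mtrace I (\<lambda>r s. a * A r s + b * B r s) = a * mtrace I A + b * mtrace I B"
  unfolding mtrace_def by (simp add: sum.distrib sum_distrib_left)

section \<open>Qubits\<close>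

lemma sum_lessThan_2: "(\<Sum>k<2. f k) = f 0 + f (1::nat)"
  by (simp add: numeral_2_eq_2)

lemma inner2_eq: "inner2 u v = cnj (u 0) * v 0 + cnj (u 1) * v 1"
  by (simp add: inner2_def sum_lessThan_2)

lemma inner2_commute: "inner2 v u = cnj (inner2 u v)"
  by (simp add: inner2_eq mult.commute)

definition onb2 :: "(nat \<Rightarrow> complex) \<Rightarrow> (nat \<Rightarrow> complex) \<Rightarrow> bool" where
  "onb2 u0 u1 \<longleftrightarrow> inner2 u0 u0 = 1 \<and> inner2 u1 u1 = 1 \<and> inner2 u0 u1 = 0"

lemma onb2_swap: "onb2 u0 u1 \<Longrightarrow> onb2 u1 u0"
  unfolding onb2_def by (metis complex_cnj_zero inner2_commute)

text \<open>Orthonormal columns of a 2x2 matrix force orthonormal rows.\<close>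
lemma onb2_completeness:
  assumes "onb2 u0 u1" "k < 2" "t < 2"
  shows "u0 k * cnj (u0 t) + u1 k * cnj (u1 t) = (if k = t then 1 else 0)"
proof -
  have "cnj (u0 0) * u0 0 + cnj (u0 1) * u0 1 = 1" "cnj (u1 0) * u1 0 + cnj (u1 1) * u1 1 = 1"
    "cnj (u0 0) * u1 0 + cnj (u0 1) * u1 1 = 0"
    using assms(1) by (simp_all add: onb2_def inner2_eq)
  moreover from this(3) have "cnj (u1 0) * u0 0 + cnj (u1 1) * u0 1 = 0"
    by (metis complex_cnj_add complex_cnj_cnj complex_cnj_mult complex_cnj_zero mult.commute)
  ultimately have "u0 0 * cnj (u0 0) + u1 0 * cnj (u1 0) = 1 \<and> u0 1 * cnj (u0 1) + u1 1 * cnj (u1 1) = 1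
      \<and> u0 0 * cnj (u0 1) + u1 0 * cnj (u1 1) = 0 \<and> u0 1 * cnj (u0 0) + u1 1 * cnj (u1 0) = 0"
    by algebra
  moreover have "k = 0 \<or> k = 1" "t = 0 \<or> t = 1" using assms(2,3) by auto
  ultimately show ?thesis by (elim disjE) simp_all
qed

lemma onb2_expand:
  assumes "onb2 u0 u1" "k < 2"
  shows "z k = inner2 u0 z * u0 k + inner2 u1 z * u1 k"
proof -
  have "inner2 u0 z * u0 k + inner2 u1 z * u1 k
      = (u0 k * cnj (u0 0) + u1 k * cnj (u1 0)) * z 0 + (u0 k * cnj (u0 1) + u1 k * cnj (u1 1)) * z 1"
    by (simp add: inner2_eq algebra_simps)
  also have "\<dots> = z k"
  proof -
    have "k = 0 \<or> k = 1" using assms(2) by auto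
    then show ?thesis
      using onb2_completeness[OF assms, of 0] onb2_completeness[OF assms, of 1] by auto
  qed
  finally show ?thesis by simp
qed

lemma mtrace_proj_mult: "mtrace {..<2} (mmult {..<2} (proj v) \<rho>) = qform {..<2} \<rho> v"
  unfolding mtrace_def mmult_def proj_def qform_def by (simp add: sum_lessThan_2 algebra_simps)

lemma qform_proj: "qform {..<2} (proj u) v = of_real ((cmod (inner2 v u))\<^sup>2)"
  unfolding proj_def inner2_def by (rule qform_rank1) simp

lemma density_on_proj: "inner2 u u = 1 \<Longrightarrow> density_on {..<2} (proj u)"
  unfolding density_on_def proj_def
  by (auto simp: psd_on_rank1 mtrace_def inner2_def mult.commute)

text \<open>Every vector of the Gram decomposition of \<open>\<rho>\<close> is orthogonal to \<open>u0\<close>, hence a multiple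
  of \<open>u1\<close>.\<close>
lemma qubit_state_with_null_direction:
  assumes dens: "density_on {..<2} \<rho>" and onb: "onb2 u0 u1" and null: "Re (qform {..<2} \<rho> u0) = 0"
  shows "Re (qform {..<2} \<rho> g) = (cmod (inner2 g u1))\<^sup>2"
proof -
  have psd: "psd_on {..<2} \<rho>" and tr: "mtrace {..<2} \<rho> = 1"
    using dens by (auto simp: density_on_def)
  obtain n :: nat and W where W: "\<forall>r\<in>{..<2}. \<forall>s\<in>{..<2}. \<rho> r s = (\<Sum>m<n. W m r * cnj (W m s))"
    using psd_on_gram[OF finite_lessThan psd] .
  have Re_qform: "Re (qform {..<2} \<rho> v) = (\<Sum>m<n. (cmod (inner2 v (W m)))\<^sup>2)" for v
    using qform_gram[OF W, of v] by (simp add: inner2_def Re_sum)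
  have "(\<Sum>m<n. (cmod (inner2 u0 (W m)))\<^sup>2) = 0"
    using null Re_qform[of u0] by simp
  then have "\<forall>m<n. inner2 u0 (W m) = 0"
    by (subst (asm) sum_nonneg_eq_0_iff) auto
  define c where "c m = inner2 u1 (W m)" for m
  have W_eq: "W m k = c m * u1 k" if "m < n" "k < 2" for m k
    using onb2_expand[OF onb that(2), of "W m"] that(1) \<open>\<forall>m<n. inner2 u0 (W m) = 0\<close>
    by (simp add: c_def)
  have "mtrace {..<2} \<rho> = (\<Sum>m<n. W m 0 * cnj (W m 0) + W m 1 * cnj (W m 1))"
    using W by (simp add: mtrace_def sum_lessThan_2 sum.distrib)
  also have "\<dots> = (\<Sum>m<n. of_real ((cmod (c m))\<^sup>2))"
  proof (intro sum.cong refl)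
    fix m assume "m \<in> {..<n}"
    then have "W m 0 * cnj (W m 0) + W m 1 * cnj (W m 1)
        = c m * cnj (c m) * inner2 u1 u1"
      using W_eq[of m 0] W_eq[of m 1] by (simp add: inner2_eq algebra_simps)
    then show "W m 0 * cnj (W m 0) + W m 1 * cnj (W m 1) = of_real ((cmod (c m))\<^sup>2)"
      using onb unfolding onb2_def complex_norm_square by simp
  qed
  finally have "(\<Sum>m<n. (cmod (c m))\<^sup>2) = 1"
    using tr by (metis Re_complex_of_real of_real_sum one_complex.sel(1))
  have "Re (qform {..<2} \<rho> g) = (\<Sum>m<n. (cmod (c m))\<^sup>2) * (cmod (inner2 g u1))\<^sup>2"
    unfolding Re_qform sum_distrib_right
  proof (intro sum.cong refl)
    fix m assume "m \<in> {..<n}"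
    then have "inner2 g (W m) = c m * inner2 g u1"
      using W_eq[of m 0] W_eq[of m 1] by (simp add: inner2_eq algebra_simps)
    then show "(cmod (inner2 g (W m)))\<^sup>2 = (cmod (c m))\<^sup>2 * (cmod (inner2 g u1))\<^sup>2"
      by (simp add: norm_mult power_mult_distrib)
  qed
  with \<open>(\<Sum>m<n. (cmod (c m))\<^sup>2) = 1\<close> show ?thesis by simp
qed

section \<open>Bob's outcome probabilities\<close>

definition outcome_prob ::
    "nat \<Rightarrow> (nat \<Rightarrow> nat \<Rightarrow> complex) \<Rightarrow> (nat \<times> nat \<Rightarrow> nat \<times> nat \<Rightarrow> complex) \<Rightarrow> (nat \<Rightarrow> complex) \<Rightarrow> complex" where
  "outcome_prob d M \<rho> v = mtrace {..<2} (mmult {..<2} (proj v) (ptraceA d M \<rho>))"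

text \<open>The operator \<open>(1 \<otimes> \<langle>v|) \<rho> (1 \<otimes> |v\<rangle>)\<close> on Alice's space.\<close>
definition compress_B ::
    "(nat \<times> nat \<Rightarrow> nat \<times> nat \<Rightarrow> complex) \<Rightarrow> (nat \<Rightarrow> complex) \<Rightarrow> nat \<Rightarrow> nat \<Rightarrow> complex" where
  "compress_B \<rho> v j i = (\<Sum>t<2. \<Sum>k<2. cnj (v t) * \<rho> (j, t) (i, k) * v k)"

lemma outcome_prob_eq_mtrace: "outcome_prob d M \<rho> v = mtrace {..<d} (mmult {..<d} M (compress_B \<rho> v))"
  unfolding outcome_prob_def compress_B_def mtrace_def mmult_def proj_def ptraceA_def
  by (simp add: sum_lessThan_2 sum.distrib sum_distrib_left algebra_simps)

lemma qform_compress_B: "qform {..<d} (compress_B \<rho> v) w = qform (joint_idx d) \<rho> (\<lambda>(i, k). w i * v k)"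
  unfolding qform_def compress_B_def joint_idx_def sum.cartesian_product'
  by (simp add: sum_lessThan_2 sum.distrib sum_distrib_left sum_distrib_right algebra_simps)

lemma psd_on_compress_B: "psd_on (joint_idx d) \<rho> \<Longrightarrow> psd_on {..<d} (compress_B \<rho> v)"
  unfolding psd_on_iff_qform qform_compress_B by blast

lemma outcome_prob_nonneg:
  assumes "psd_on {..<d} M" "psd_on (joint_idx d) \<rho>"
  shows "Re (outcome_prob d M \<rho> v) \<ge> 0"
  unfolding outcome_prob_eq_mtrace
  by (rule trace_mult_psd_nonneg[OF finite_lessThan assms(1) psd_on_compress_B[OF assms(2)]])

lemma outcome_prob_povm_sum:
  assumes "\<forall>i<d. \<forall>j<d. M0 i j + M1 i j = (if i = j then 1 else 0)"
  shows "outcome_prob d M0 \<rho> v + outcome_prob d M1 \<rho> v = (\<Sum>i<d. compress_B \<rho> v i i)"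
proof -
  have "outcome_prob d M0 \<rho> v + outcome_prob d M1 \<rho> v
      = (\<Sum>i<d. \<Sum>j<d. (M0 i j + M1 i j) * compress_B \<rho> v j i)"
    unfolding outcome_prob_eq_mtrace mtrace_def mmult_def by (simp add: sum.distrib algebra_simps)
  also have "\<dots> = (\<Sum>i<d. \<Sum>j<d. if i = j then compress_B \<rho> v j i else 0)"
    using assms by (intro sum.cong refl) auto
  also have "\<dots> = (\<Sum>i<d. compress_B \<rho> v i i)"
    by simp
  finally show ?thesis .
qed

lemma compress_B_onb2_sum:
  assumes "onb2 u0 u1"
  shows "compress_B \<rho> u0 i i + compress_B \<rho> u1 i i = \<rho> (i, 0) (i, 0) + \<rho> (i, 1) (i, 1)"
proof -
  have c: "cnj (u0 t) * u0 k + cnj (u1 t) * u1 k = (if k = t then 1 else 0)" if "k < 2" "t < 2" for k t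
    using onb2_completeness[OF assms that] by (simp add: mult.commute)
  have "compress_B \<rho> u0 i i + compress_B \<rho> u1 i i =
     (cnj (u0 0) * u0 0 + cnj (u1 0) * u1 0) * \<rho> (i, 0) (i, 0) +
     (cnj (u0 0) * u0 1 + cnj (u1 0) * u1 1) * \<rho> (i, 0) (i, 1) +
     (cnj (u0 1) * u0 0 + cnj (u1 1) * u1 0) * \<rho> (i, 1) (i, 0) +
     (cnj (u0 1) * u0 1 + cnj (u1 1) * u1 1) * \<rho> (i, 1) (i, 1)"
    unfolding compress_B_def by (simp add: sum_lessThan_2 algebra_simps)
  then show ?thesis using c[of 0 0] c[of 0 1] c[of 1 0] c[of 1 1] by simp
qed

lemma outcome_prob_total:
  assumes "\<forall>i<d. \<forall>j<d. M0 i j + M1 i j = (if i = j then 1 else 0)" "onb2 u0 u1"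
  shows "outcome_prob d M0 \<rho> u0 + outcome_prob d M0 \<rho> u1 + outcome_prob d M1 \<rho> u0
      + outcome_prob d M1 \<rho> u1 = mtrace (joint_idx d) \<rho>"
proof -
  have "outcome_prob d M0 \<rho> u0 + outcome_prob d M0 \<rho> u1 + outcome_prob d M1 \<rho> u0
      + outcome_prob d M1 \<rho> u1 = (outcome_prob d M0 \<rho> u0 + outcome_prob d M1 \<rho> u0)
      + (outcome_prob d M0 \<rho> u1 + outcome_prob d M1 \<rho> u1)"
    by (simp only: add_ac)
  also have "\<dots> = (\<Sum>i<d. compress_B \<rho> u0 i i + compress_B \<rho> u1 i i)"
    unfolding outcome_prob_povm_sum[OF assms(1)] by (simp add: sum.distrib)
  also have "\<dots> = mtrace (joint_idx d) \<rho>"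
    unfolding compress_B_onb2_sum[OF assms(2)] mtrace_def joint_idx_def sum.cartesian_product'
    by (simp add: sum_lessThan_2)
  finally show ?thesis .
qed

lemma outcome_prob_combination:
  "outcome_prob d M (\<lambda>r s. a * A r s + b * B r s) v = a * outcome_prob d M A v + b * outcome_prob d M B v"
  unfolding outcome_prob_eq_mtrace compress_B_def mtrace_def mmult_def
  by (simp add: sum.distrib sum_distrib_left algebra_simps)

lemma outcome_prob_rank1:
  "outcome_prob 2 (proj m) (\<lambda>r s. z r * cnj (z s)) v
     = of_real ((cmod (\<Sum>j<2. \<Sum>t<2. cnj (m j) * cnj (v t) * z (j, t)))\<^sup>2)"
  unfolding outcome_prob_eq_mtrace compress_B_def mtrace_def mmult_def proj_def complex_norm_square
  by (simp add: sum_lessThan_2 algebra_simps)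

section \<open>Boxes\<close>

lemma bits_iff: "x \<in> bits \<longleftrightarrow> x = 0 \<or> x = 1"
  by (auto simp: bits_def)

lemma MUB_pair_onb2: "MUB_pair e \<Longrightarrow> y \<in> bits \<Longrightarrow> onb2 (e y 0) (e y 1)"
  unfolding MUB_pair_def onb2_def by (auto simp: bits_def)

lemma MUB_pair_overlap:
  assumes "MUB_pair e" "i \<in> bits" "j \<in> bits" "k \<in> bits" "l \<in> bits"
  shows "(cmod (inner2 (e i j) (e k l)))\<^sup>2 = (if i = k then (if j = l then 1 else 0) else 1/2)"
proof (cases "i = k")
  case True
  then show ?thesis using assms unfolding MUB_pair_def by simp
next
  case False
  have unbiased: "(cmod (inner2 (e 0 j') (e 1 l')))\<^sup>2 = 1/2" if "j' \<in> bits" "l' \<in> bits" for j' l'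
    using assms(1) that unfolding MUB_pair_def by blast
  from False assms(2,4) have "i = 0 \<and> k = 1 \<or> i = 1 \<and> k = 0" by (auto simp: bits_def)
  then show ?thesis
  proof
    assume "i = 0 \<and> k = 1"
    then show ?thesis using unbiased[OF assms(3,5)] by simp
  next
    assume "i = 1 \<and> k = 0"
    then show ?thesis using unbiased[OF assms(5,3)] by (subst inner2_commute) (simp add: complex_mod_cnj)
  qed
qed

definition qbox ::
    "(nat \<Rightarrow> nat \<Rightarrow> nat \<Rightarrow> complex) \<Rightarrow> nat \<Rightarrow> (nat \<Rightarrow> nat \<Rightarrow> nat \<Rightarrow> nat \<Rightarrow> complex)
      \<Rightarrow> (nat \<times> nat \<Rightarrow> nat \<times> nat \<Rightarrow> complex) \<Rightarrow> box" where
  "qbox e d M \<rho> a b x y = Re (outcome_prob d (M x a) \<rho> (e y b))"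

lemma quantum_box_iff:
  "quantum_box e P \<longleftrightarrow> (\<exists>d>0. \<exists>\<rho> M. density_on (joint_idx d) \<rho> \<and> (\<forall>x\<in>bits. povm2 d (M x)) \<and>
     (\<forall>a\<in>bits. \<forall>b\<in>bits. \<forall>x\<in>bits. \<forall>y\<in>bits. P a b x y = qbox e d M \<rho> a b x y))"
  by (simp add: quantum_box_def qbox_def outcome_prob_def)

lemma quantum_box_nonneg:
  assumes "quantum_box e P" "a \<in> bits" "b \<in> bits" "x \<in> bits" "y \<in> bits"
  shows "P a b x y \<ge> 0"
proof -
  obtain d \<rho> M where dens: "density_on (joint_idx d) \<rho>" and povm: "\<forall>x\<in>bits. povm2 d (M x)"
    and P: "P a b x y = qbox e d M \<rho> a b x y"
    using assms unfolding quantum_box_iff by blast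
  have "psd_on {..<d} (M x a)" using povm assms(2,4) unfolding povm2_def by blast
  with dens show ?thesis
    unfolding P qbox_def density_on_def by (blast intro: outcome_prob_nonneg)
qed

lemma quantum_box_normalized:
  assumes "MUB_pair e" "quantum_box e P" "x \<in> bits" "y \<in> bits"
  shows "P 0 0 x y + P 0 1 x y + P 1 0 x y + P 1 1 x y = 1"
proof -
  obtain d \<rho> M where dens: "density_on (joint_idx d) \<rho>" and povm: "\<forall>x\<in>bits. povm2 d (M x)"
    and P: "\<forall>a\<in>bits. \<forall>b\<in>bits. P a b x y = qbox e d M \<rho> a b x y"
    using assms(2-4) unfolding quantum_box_iff by blast
  have "\<forall>i<d. \<forall>j<d. M x 0 i j + M x 1 i j = (if i = j then 1 else 0)"
    using povm assms(3) unfolding povm2_def by blast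
  from outcome_prob_total[OF this MUB_pair_onb2[OF assms(1,4)], of \<rho>] dens
  have "Re (outcome_prob d (M x 0) \<rho> (e y 0) + outcome_prob d (M x 0) \<rho> (e y 1)
      + outcome_prob d (M x 1) \<rho> (e y 0) + outcome_prob d (M x 1) \<rho> (e y 1)) = 1"
    by (simp add: density_on_def)
  with P show ?thesis by (simp add: qbox_def bits_def)
qed

definition correlator :: "box \<Rightarrow> nat \<Rightarrow> nat \<Rightarrow> real" where
  "correlator P x y = P 0 0 x y + P 1 1 x y - P 0 1 x y - P 1 0 x y"

lemma quantum_box_correlator_ge:
  assumes "MUB_pair e" "quantum_box e P" "x \<in> bits" "y \<in> bits"
  shows "correlator P x y \<ge> -1"
  using quantum_box_normalized[OF assms] quantum_box_nonneg[OF assms(2), of 0 0 x y]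
    quantum_box_nonneg[OF assms(2), of 1 1 x y] assms(3,4)
  by (simp add: correlator_def bits_def)

lemma unsteerable_iff:
  "unsteerable e P \<longleftrightarrow> (\<exists>n::nat. \<exists>pl::nat \<Rightarrow> real. \<exists>pa::nat \<Rightarrow> nat \<Rightarrow> nat \<Rightarrow> real.
     \<exists>rl::nat \<Rightarrow> nat \<Rightarrow> nat \<Rightarrow> complex.
     (\<forall>l<n. pl l \<ge> 0) \<and> (\<Sum>l<n. pl l) = 1 \<and>
     (\<forall>l<n. \<forall>x\<in>bits. (\<forall>a\<in>bits. pa l x a \<ge> 0) \<and> pa l x 0 + pa l x 1 = 1) \<and>
     (\<forall>l<n. density_on {..<2} (rl l)) \<and>
     (\<forall>a\<in>bits. \<forall>b\<in>bits. \<forall>x\<in>bits. \<forall>y\<in>bits.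
        P a b x y = (\<Sum>l<n. pl l * pa l x a * Re (qform {..<2} (rl l) (e y b)))))"
  by (simp add: unsteerable_def mtrace_proj_mult)

lemma unsteerable_nonneg:
  assumes "unsteerable e P" "a \<in> bits" "b \<in> bits" "x \<in> bits" "y \<in> bits"
  shows "P a b x y \<ge> 0"
proof -
  obtain n :: nat and pl pa rl where pl: "\<forall>l<n. pl l \<ge> 0"
    and pa: "\<forall>l<n. \<forall>x\<in>bits. (\<forall>a\<in>bits. pa l x a \<ge> 0) \<and> pa l x 0 + pa l x 1 = 1"
    and rl: "\<forall>l<n. density_on {..<2} (rl l)"
    and P: "\<forall>a\<in>bits. \<forall>b\<in>bits. \<forall>x\<in>bits. \<forall>y\<in>bits.
      P a b x y = (\<Sum>l<n. pl l * pa l x a * Re (qform {..<2} (rl l) (e y b)))"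
    using assms(1) unfolding unsteerable_iff by blast
  have "Re (qform {..<2} (rl l) (e y b)) \<ge> 0" if "l < n" for l
    using rl that unfolding density_on_def psd_on_iff_qform by blast
  with pl pa assms(2-5) P show ?thesis
    by (auto intro!: sum_nonneg mult_nonneg_nonneg)
qed

text \<open>Every hidden state compatible with the perfect correlations for \<open>x = y = 0\<close> is a vector
  \<open>e 0 a\<close> of the first basis, and therefore gives unbiased outcomes in the basis \<open>e 1\<close>.\<close>
lemma unsteerable_correlator_zero:
  assumes mub: "MUB_pair e" and P: "unsteerable e P"
    and correlated: "\<forall>a\<in>bits. \<forall>b\<in>bits. a \<noteq> b \<longrightarrow> P a b 0 0 = 0"
  shows "correlator P 1 1 = 0"
proof -
  obtain n :: nat and pl pa rl where pl: "\<forall>l<n. pl l \<ge> 0"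
    and pa: "\<forall>l<n. \<forall>x\<in>bits. (\<forall>a\<in>bits. pa l x a \<ge> 0) \<and> pa l x 0 + pa l x 1 = 1"
    and rl: "\<forall>l<n. density_on {..<2} (rl l)"
    and P_eq: "\<forall>a\<in>bits. \<forall>b\<in>bits. \<forall>x\<in>bits. \<forall>y\<in>bits.
      P a b x y = (\<Sum>l<n. pl l * pa l x a * Re (qform {..<2} (rl l) (e y b)))"
    using P unfolding unsteerable_iff by blast
  define R where "R l v = Re (qform {..<2} (rl l) v)" for l v
  have onb2_basis0: "onb2 (e 0 0) (e 0 1)" using MUB_pair_onb2[OF mub] by (simp add: bits_def)
  have R_nonneg: "R l v \<ge> 0" if "l < n" for l v
    using rl that unfolding R_def density_on_def psd_on_iff_qform by blast
  have unbiased: "pl l * (R l (e 1 0) - R l (e 1 1)) = 0" if l: "l < n" for l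
  proof (cases "pl l = 0")
    case False
    have "pa l 0 0 + pa l 0 1 = 1" using pa l by (simp add: bits_def)
    then have "pa l 0 0 > 0 \<or> pa l 0 1 > 0" by linarith
    then obtain a where a: "a \<in> bits" "pa l 0 a > 0" unfolding bits_def by blast
    have b: "1 - a \<in> bits" "a \<noteq> 1 - a" using a(1) by (auto simp: bits_def)
    have "(\<Sum>l<n. pl l * pa l 0 a * R l (e 0 (1 - a))) = P a (1 - a) 0 0"
      using P_eq[rule_format, OF a(1) b(1), of 0 0] unfolding R_def bits_def by simp
    also have "\<dots> = 0" using correlated a(1) b by blast
    finally have "(\<Sum>l<n. pl l * pa l 0 a * R l (e 0 (1 - a))) = 0" .
    moreover have "\<forall>l\<in>{..<n}. pl l * pa l 0 a * R l (e 0 (1 - a)) \<ge> 0"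
      using pl pa a(1) R_nonneg by (auto simp: bits_def intro!: mult_nonneg_nonneg)
    ultimately have "pl l * pa l 0 a * R l (e 0 (1 - a)) = 0"
      using l sum_nonneg_eq_0_iff[of "{..<n}" "\<lambda>l. pl l * pa l 0 a * R l (e 0 (1 - a))"] by simp
    with False a(2) have null: "R l (e 0 (1 - a)) = 0" by simp
    have "onb2 (e 0 (1 - a)) (e 0 a)"
      using a(1) onb2_basis0 onb2_swap[OF onb2_basis0] by (auto simp: bits_def)
    then have "R l (e 1 j) = (cmod (inner2 (e 1 j) (e 0 a)))\<^sup>2" for j
      unfolding R_def
      by (rule qubit_state_with_null_direction[OF rl[rule_format, OF l] _ null[unfolded R_def]])
    then have "R l (e 1 j) = 1/2" if "j \<in> bits" for j
      using MUB_pair_overlap[OF mub _ that _ a(1)] by (simp add: bits_def)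
    then have "R l (e 1 0) = 1/2" "R l (e 1 1) = 1/2" by (simp_all add: bits_def)
    then show ?thesis by simp
  qed simp
  have bit1: "(1::nat) \<in> bits" by (simp add: bits_def)
  have "P a b 1 1 = (\<Sum>l<n. pl l * pa l 1 a * R l (e 1 b))" if "a \<in> bits" "b \<in> bits" for a b
    using P_eq[rule_format, OF that bit1 bit1] unfolding R_def .
  with bit1 have "correlator P 1 1 = (\<Sum>l<n. pl l * pa l 1 0 * R l (e 1 0)
      + pl l * pa l 1 1 * R l (e 1 1) - pl l * pa l 1 0 * R l (e 1 1) - pl l * pa l 1 1 * R l (e 1 0))"
    unfolding correlator_def by (simp add: bits_def sum.distrib sum_subtractf)
  also have "\<dots> = (\<Sum>l<n. (pa l 1 0 - pa l 1 1) * (pl l * (R l (e 1 0) - R l (e 1 1))))"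
    by (intro sum.cong refl) (simp add: algebra_simps)
  also have "\<dots> = 0" using unbiased by (intro sum.neutral) simp
  finally show ?thesis .
qed

section \<open>The noisy BB84 box\<close>

definition phi_plus :: "nat \<times> nat \<Rightarrow> complex" where
  "phi_plus = (\<lambda>(i, k). if i = k then of_real (1 / sqrt 2) else 0)"

definition bell_state :: "nat \<times> nat \<Rightarrow> nat \<times> nat \<Rightarrow> complex" where
  "bell_state r s = phi_plus r * cnj (phi_plus s)"

definition product_vec :: "(nat \<Rightarrow> complex) \<Rightarrow> nat \<times> nat \<Rightarrow> complex" where
  "product_vec f = (\<lambda>(i, k). cnj (f i) * f k)"

definition classical_state :: "(nat \<Rightarrow> nat \<Rightarrow> nat \<Rightarrow> complex) \<Rightarrow> nat \<times> nat \<Rightarrow> nat \<times> nat \<Rightarrow> complex" where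
  "classical_state e r s = of_real (1/2) * (product_vec (e 0 0) r * cnj (product_vec (e 0 0) s))
     + of_real (1/2) * (product_vec (e 0 1) r * cnj (product_vec (e 0 1) s))"

text \<open>Alice projects onto complex conjugated basis vectors, so that on \<open>|\<Phi>\<^sup>+\<rangle>\<close> her outcome
  agrees with Bob's in the same basis; for \<open>x = 1\<close> she relabels her outcome, since the box is
  anticorrelated for \<open>x = y = 1\<close>.\<close>
definition alice_meas :: "(nat \<Rightarrow> nat \<Rightarrow> nat \<Rightarrow> complex) \<Rightarrow> nat \<Rightarrow> nat \<Rightarrow> nat \<Rightarrow> nat \<Rightarrow> complex" where
  "alice_meas e x a = proj (\<lambda>k. cnj (e x (if x = 0 then a else 1 - a) k))"

lemma outcome_prob_bell_state:
  "outcome_prob 2 (proj (\<lambda>k. cnj (u k))) bell_state v = of_real ((cmod (inner2 v u))\<^sup>2 / 2)"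
proof -
  have "(\<Sum>j<2. \<Sum>t<2. cnj (cnj (u j)) * cnj (v t) * phi_plus (j, t)) = inner2 v u * of_real (1 / sqrt 2)"
    by (simp add: sum_lessThan_2 phi_plus_def inner2_eq algebra_simps)
  then have "outcome_prob 2 (proj (\<lambda>k. cnj (u k))) bell_state v
      = of_real ((cmod (inner2 v u * of_real (1 / sqrt 2)))\<^sup>2)"
    unfolding bell_state_def by (simp only: outcome_prob_rank1)
  also have "(cmod (inner2 v u * of_real (1 / sqrt 2)))\<^sup>2 = (cmod (inner2 v u))\<^sup>2 / 2"
    by (simp add: norm_mult norm_divide power_mult_distrib power_divide)
  finally show ?thesis .
qed

lemma outcome_prob_product_vec:
  "outcome_prob 2 (proj (\<lambda>k. cnj (u k))) (\<lambda>r s. product_vec f r * cnj (product_vec f s)) v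
     = of_real ((cmod (inner2 f u))\<^sup>2 * (cmod (inner2 v f))\<^sup>2)"
proof -
  have "(\<Sum>j<2. \<Sum>t<2. cnj (cnj (u j)) * cnj (v t) * product_vec f (j, t)) = inner2 f u * inner2 v f"
    by (simp add: sum_lessThan_2 product_vec_def inner2_eq algebra_simps)
  then show ?thesis by (simp add: outcome_prob_rank1 norm_mult power_mult_distrib)
qed

lemma density_on_bell_state: "density_on (joint_idx 2) bell_state"
proof -
  have "(of_real (1 / sqrt 2) :: complex) * of_real (1 / sqrt 2) = 1/2"
    by (simp flip: of_real_mult)
  then have "mtrace (joint_idx 2) bell_state = 1"
    unfolding mtrace_def joint_idx_def sum.cartesian_product'
    by (simp add: sum_lessThan_2 bell_state_def phi_plus_def)
  then show ?thesis
    using psd_on_rank1[of "joint_idx 2" phi_plus]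
    unfolding density_on_def bell_state_def by (simp add: joint_idx_def)
qed

lemma mtrace_product_vec:
  assumes "inner2 f f = 1"
  shows "mtrace (joint_idx 2) (\<lambda>r s. product_vec f r * cnj (product_vec f s)) = 1"
proof -
  have "mtrace (joint_idx 2) (\<lambda>r s. product_vec f r * cnj (product_vec f s))
      = (cnj (f 0) * f 0 + cnj (f 1) * f 1) * (cnj (f 0) * f 0 + cnj (f 1) * f 1)"
    unfolding mtrace_def joint_idx_def sum.cartesian_product'
    by (simp add: sum_lessThan_2 product_vec_def algebra_simps)
  with assms show ?thesis by (simp add: inner2_eq)
qed

definition bb84_box :: "(nat \<Rightarrow> nat \<Rightarrow> nat \<Rightarrow> complex) \<Rightarrow> box" where
  "bb84_box e = qbox e 2 (alice_meas e) bell_state"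

definition classical_box :: box where
  "classical_box a b x y = (if x = 0 \<and> y = 0 then (if a = b then 1/2 else 0) else 1/4)"

context
  fixes e :: "nat \<Rightarrow> nat \<Rightarrow> nat \<Rightarrow> complex"
  assumes mub: "MUB_pair e"
begin

lemma density_on_classical_state: "density_on (joint_idx 2) (classical_state e)"
proof -
  have fin: "finite (joint_idx 2)" by (simp add: joint_idx_def)
  have "inner2 (e 0 0) (e 0 0) = 1" "inner2 (e 0 1) (e 0 1) = 1"
    using MUB_pair_onb2[OF mub, of 0] by (simp_all add: onb2_def bits_def)
  moreover have "psd_on (joint_idx 2) (classical_state e)"
    unfolding classical_state_def
    by (rule psd_on_combination[OF psd_on_rank1[OF fin] psd_on_rank1[OF fin]]) simp_all
  ultimately show ?thesis
    unfolding density_on_def classical_state_def mtrace_combination by (simp add: mtrace_product_vec)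
qed

lemma povm2_alice_meas: "x \<in> bits \<Longrightarrow> povm2 2 (alice_meas e x)"
proof -
  assume x: "x \<in> bits"
  have "alice_meas e x 0 i j + alice_meas e x 1 i j = (if i = j then 1 else 0)" if "i < 2" "j < 2" for i j
  proof -
    have "cnj (e x 0 i) * e x 0 j + cnj (e x 1 i) * e x 1 j = (if i = j then 1 else 0)"
      using onb2_completeness[OF MUB_pair_onb2[OF mub x] that(2,1)] by (auto simp: mult.commute)
    with x show ?thesis unfolding alice_meas_def proj_def bits_def by (auto simp: add.commute)
  qed
  moreover have "psd_on {..<2} (alice_meas e x a)" for a
    unfolding alice_meas_def psd_on_iff_qform qform_proj by simp
  ultimately show ?thesis unfolding povm2_def by auto
qed

lemma bb84_box_eq:
  assumes "a \<in> bits" "b \<in> bits" "x \<in> bits" "y \<in> bits"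
  shows "bb84_box e a b x y = (if x = y then (if (a = b) = (x = 0) then 1/2 else 0) else 1/4)"
proof -
  have "bb84_box e a b x y = (cmod (inner2 (e y b) (e x (if x = 0 then a else 1 - a))))\<^sup>2 / 2"
    unfolding bb84_box_def qbox_def alice_meas_def outcome_prob_bell_state by simp
  with assms show ?thesis
    unfolding bits_iff by (elim disjE) (simp_all add: MUB_pair_overlap[OF mub] bits_def)
qed

lemma qbox_classical_state:
  assumes "a \<in> bits" "b \<in> bits" "x \<in> bits" "y \<in> bits"
  shows "qbox e 2 (alice_meas e) (classical_state e) a b x y = classical_box a b x y"
proof -
  let ?u = "e x (if x = 0 then a else 1 - a)"
  have "qbox e 2 (alice_meas e) (classical_state e) a b x y
      = 1/2 * ((cmod (inner2 (e 0 0) ?u))\<^sup>2 * (cmod (inner2 (e y b) (e 0 0)))\<^sup>2)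
      + 1/2 * ((cmod (inner2 (e 0 1) ?u))\<^sup>2 * (cmod (inner2 (e y b) (e 0 1)))\<^sup>2)"
    unfolding qbox_def alice_meas_def classical_state_def outcome_prob_combination
      outcome_prob_product_vec by simp
  with assms show ?thesis
    unfolding bits_iff by (elim disjE) (simp_all add: MUB_pair_overlap[OF mub] bits_def classical_box_def)
qed

lemma P_col_BB84_split:
  assumes "a \<in> bits" "b \<in> bits" "x \<in> bits" "y \<in> bits"
  shows "P_col_BB84 V a b x y = V * bb84_box e a b x y + (1 - V) * classical_box a b x y"
  using assms unfolding bb84_box_eq[OF assms] classical_box_def P_col_BB84_def bits_iff
  by (elim disjE) (simp_all add: field_simps)

lemma quantum_box_P_col_BB84:
  assumes "0 \<le> V" "V \<le> 1"
  shows "quantum_box e (P_col_BB84 V)"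
  unfolding quantum_box_iff
proof (intro exI conjI ballI)
  let ?\<rho> = "\<lambda>r s. of_real V * bell_state r s + of_real (1 - V) * classical_state e r s"
  have "psd_on (joint_idx 2) ?\<rho>"
    using density_on_bell_state density_on_classical_state assms
    unfolding density_on_def by (intro psd_on_combination) auto
  then show "density_on (joint_idx 2) ?\<rho>"
    using density_on_bell_state density_on_classical_state
    unfolding density_on_def mtrace_combination by simp
  show "povm2 2 (alice_meas e x)" if "x \<in> bits" for x
    using povm2_alice_meas[OF that] .
  fix a b x y assume bits: "a \<in> bits" "b \<in> bits" "x \<in> bits" "y \<in> bits"
  show "P_col_BB84 V a b x y = qbox e 2 (alice_meas e) ?\<rho> a b x y"
    unfolding P_col_BB84_split[OF bits] qbox_classical_state[OF bits, symmetric]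
    by (simp add: qbox_def bb84_box_def outcome_prob_combination)
qed simp

lemma quantum_box_bb84_box: "quantum_box e (bb84_box e)"
  unfolding quantum_box_iff bb84_box_def
  using density_on_bell_state povm2_alice_meas by (intro exI[of _ 2]) auto

lemma steerable_bb84_box: "steerable e (bb84_box e)"
  unfolding steerable_def
proof
  assume "unsteerable e (bb84_box e)"
  moreover have "\<forall>a\<in>bits. \<forall>b\<in>bits. a \<noteq> b \<longrightarrow> bb84_box e a b 0 0 = 0"
    by (simp add: bb84_box_eq bits_def)
  ultimately have "correlator (bb84_box e) 1 1 = 0"
    by (rule unsteerable_correlator_zero[OF mub])
  then show False by (simp add: correlator_def bb84_box_eq bits_def)
qed

lemma unsteerable_classical_box: "unsteerable e classical_box"
  unfolding unsteerable_iff
proof (intro exI conjI ballI)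
  let ?pa = "\<lambda>l x a. if x = 0 then (if a = l then 1 else 0) else 1/2 :: real"
  show "\<forall>l<2. density_on {..<2} (proj (e 0 l))"
    using MUB_pair_onb2[OF mub, of 0] by (auto intro!: density_on_proj simp: onb2_def bits_def less_2_cases_iff)
  fix a b x y assume bits: "a \<in> bits" "b \<in> bits" "x \<in> bits" "y \<in> bits"
  show "classical_box a b x y = (\<Sum>l<2. 1/2 * ?pa l x a * Re (qform {..<2} (proj (e 0 l)) (e y b)))"
    using bits unfolding qform_proj bits_iff
    by (elim disjE) (simp_all add: sum_lessThan_2 classical_box_def MUB_pair_overlap[OF mub] bits_def)
qed (auto simp: bits_def)

lemma steer_weights_P_col_BB84_ge:
  assumes "V \<le> 1" and p: "p \<in> steer_weights e (P_col_BB84 V)"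
  shows "V \<le> p"
proof (cases "p = 1")
  case False
  obtain PS PUS where p01: "0 \<le> p" "p \<le> 1" and PS: "quantum_box e PS"
    and PUS: "unsteerable e PUS"
    and split: "\<forall>a\<in>bits. \<forall>b\<in>bits. \<forall>x\<in>bits. \<forall>y\<in>bits.
      P_col_BB84 V a b x y = p * PS a b x y + (1 - p) * PUS a b x y"
    using p unfolding steer_weights_def by blast
  have "PUS a b 0 0 = 0" if "a \<in> bits" "b \<in> bits" "a \<noteq> b" for a b
  proof -
    have zero: "(0::nat) \<in> bits" by (simp add: bits_def)
    have "P_col_BB84 V a b 0 0 = 0"
      using that unfolding P_col_BB84_def bits_iff by (auto simp: field_simps)
    moreover have "p * PS a b 0 0 \<ge> 0" "PUS a b 0 0 \<ge> 0"
      using quantum_box_nonneg[OF PS that(1,2) zero zero] unsteerable_nonneg[OF PUS that(1,2) zero zero] p01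
      by simp_all
    ultimately show ?thesis
      using split that(1,2) zero False p01 by (simp add: add_nonneg_eq_0_iff)
  qed
  then have "correlator PUS 1 1 = 0"
    using unsteerable_correlator_zero[OF mub PUS] by blast
  moreover have "correlator (P_col_BB84 V) 1 1 = p * correlator PS 1 1 + (1 - p) * correlator PUS 1 1"
    using split unfolding correlator_def by (simp add: bits_def algebra_simps)
  moreover have "correlator (P_col_BB84 V) 1 1 = - V"
    by (simp add: correlator_def P_col_BB84_def field_simps)
  moreover have "correlator PS 1 1 \<ge> -1"
    using quantum_box_correlator_ge[OF mub PS] by (simp add: bits_def)
  then have "p * correlator PS 1 1 \<ge> - p"
    using mult_left_mono[of "-1" "correlator PS 1 1" p] p01 by simp
  ultimately have "- V = p * correlator PS 1 1" by simp
  with \<open>p * correlator PS 1 1 \<ge> - p\<close> show ?thesis by linarith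
qed (use assms in simp)

end

theorem corollary2:
  fixes V :: real and e :: "nat \<Rightarrow> nat \<Rightarrow> nat \<Rightarrow> complex"
  assumes "0 < V" and "V \<le> 1" and "MUB_pair e"
  shows "quantum_box e (P_col_BB84 V) \<and> is_steering_cost e (P_col_BB84 V) V"
proof -
  have "V \<in> steer_weights e (P_col_BB84 V)"
    unfolding steer_weights_def
    using assms P_col_BB84_split[OF assms(3)] quantum_box_bb84_box[OF assms(3)]
      steerable_bb84_box[OF assms(3)] unsteerable_classical_box[OF assms(3)]
    by (intro CollectI conjI exI[of _ "bb84_box e"] exI[of _ classical_box]) auto
  then show ?thesis
    using quantum_box_P_col_BB84[OF assms(3)] steer_weights_P_col_BB84_ge[OF assms(3,2)] assms(1,2)
    unfolding is_steering_cost_def by auto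
qed

end
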